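(* Let $\mathcal K$ be an abstract Krivine structure and let $\mathcal A_{\mathcal K\bullet}=(\mathcal P_\bullet(\Pi),\circ_\bullet,\to_\bullet,\supseteq,\mathsf k_\bullet,\mathsf s_\bullet,\Phi)$ as defined below. On $\mathcal P_\bullet(\Pi)$ consider the relation $\sqsubseteq_\bullet$: $Q\sqsubseteq_\bullet R$ iff there is $t\in\mathrm{QP}$ with $t\perp Q\to_\bullet R$; and the relation $\sqsubseteq_{\mathcal A}$: $Q\sqsubseteq_{\mathcal A}R$ iff there is $F\in\Phi$ with $F\circ_\bullet Q\supseteq R$. Then these two relations coincide, so $\mathcal H_{\mathcal K\bullet}=(\mathcal P_\bullet(\Pi),\sqsubseteq_\bullet)$ and the preorder $\mathcal H_{\mathcal A_{\mathcal K\bullet}}=(\mathcal P_\bullet(\Pi),\sqsubseteq_{\mathcal A})$ are isomorphic; in particular $\mathcal H_{\mathcal K\bullet}$ is a Heyting preorder.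
   Context: An abstract Krivine structure $\mathcal K$ consists of sets $\Lambda,\Pi$, a relation $\perp\subseteq\Lambda\times\Pi$ ($t\perp P$ means $t\perp\pi$ for all $\pi\in P$), a map $\mathrm{push}$ written $t\cdot\pi$ (associating to the right), an application $ts$ on $\Lambda$ (associating to the left), a subset $\mathrm{QP}\subseteq\Lambda$ closed under application, and $\mathsf K,\mathsf S\in\mathrm{QP}$ with: $t\perp s\cdot\pi\Rightarrow ts\perp\pi$; $t\perp\pi\Rightarrow\mathsf K\perp t\cdot s\cdot\pi$; $tu(su)\perp\pi\Rightarrow\mathsf S\perp t\cdot s\cdot u\cdot\pi$. Polars: $L^\perp=\{\pi:\forall t\in L,\ t\perp\pi\}$, ${}^\perp P=\{t:\forall\pi\in P,\ t\perp\pi\}$; $\overline P=({}^\perp P)^\perp$; $\widehat P=\bigcup_{\pi\in P}\overline{\{\pi\}}$; $\mathcal P_\bullet(\Pi)=\{P:\widehat P=P\}$. For $P,Q\subseteq\Pi$: $P\to_\bullet Q=\widehat{\{t\cdot\pi:t\in{}^\perp P,\pi\in Q\}}$, $P\circ_\bullet Q=\{\pi: t\cdot\pi'\in P\ \forall t\in{}^\perp Q,\ \pi'\in\overline{\{\pi\}}\}$. $\mathsf E=\mathsf S(\mathsf K(\mathsf S\mathsf K\mathsf K))$, $\mathsf B=\mathsf S(\mathsf K\mathsf S)\mathsf K$, $\mathsf k_\bullet=\{\mathsf E\mathsf K\}^\perp$, $\mathsf s_\bullet=\{\mathsf E((\mathsf B\mathsf E)\mathsf S)\}^\perp$, $\Phi=\{P\in\mathcal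 P_\bullet(\Pi):\exists t\in\mathrm{QP},\ t\perp P\}$. $\mathcal A_{\mathcal K\bullet}$ is a full adjunction implicative ordered combinatory algebra with order $P\le Q\iff P\supseteq Q$, and its associated Heyting preorder has underlying preorder $\sqsubseteq_{\mathcal A}$, meet $a\wedge b=\mathsf p\circ_\bullet a\circ_\bullet b$ (with $\mathsf p$ the pairing combinator $\lambda^*x\lambda^*y\lambda^*z.zxy$ built from $\mathsf k_\bullet,\mathsf s_\bullet$) and implication $\to_\bullet$. A Heyting preorder is a preorder with finite meets ($\wedge$, top $\top$) and a binary operation $\to$ with $a\wedge b\le c\iff a\le b\to c$. *)

theory Defs
  imports Main
begin

record ('l, 'p) aks =
  perp :: "'l \<Rightarrow> 'p \<Rightarrow> bool"
  push :: "'l \<Rightarrow> 'p \<Rightarrow> 'p"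
  app  :: "'l \<Rightarrow> 'l \<Rightarrow> 'l"
  QP   :: "'l set"
  Kc   :: 'l
  Sc   :: 'l

definition is_aks :: "('l, 'p) aks \<Rightarrow> bool" where
  "is_aks K \<longleftrightarrow>
     (\<forall>t\<in>QP K. \<forall>s\<in>QP K. app K t s \<in> QP K) \<and>
     Kc K \<in> QP K \<and> Sc K \<in> QP K \<and>
     (\<forall>t s \<pi>. perp K t (push K s \<pi>) \<longrightarrow> perp K (app K t s) \<pi>) \<and>
     (\<forall>t s \<pi>. perp K t \<pi> \<longrightarrow> perp K (Kc K) (push K t (push K s \<pi>))) \<and>
     (\<forall>t s u \<pi>. perp K (app K (app K t u) (app K s u)) \<pi> \<longrightarrow>
                perp K (Sc K) (push K t (push K s (push K u \<pi>))))"

definition lpol :: "('l, 'p) aks \<Rightarrow> 'l set \<Rightarrow> 'p set" where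
  "lpol K L = {\<pi>. \<forall>t\<in>L. perp K t \<pi>}"

definition rpol :: "('l, 'p) aks \<Rightarrow> 'p set \<Rightarrow> 'l set" where
  "rpol K P = {t. \<forall>\<pi>\<in>P. perp K t \<pi>}"

definition pcl :: "('l, 'p) aks \<Rightarrow> 'p set \<Rightarrow> 'p set" where
  "pcl K P = lpol K (rpol K P)"

definition phat :: "('l, 'p) aks \<Rightarrow> 'p set \<Rightarrow> 'p set" where
  "phat K P = (\<Union>\<pi>\<in>P. pcl K {\<pi>})"

definition Pbul :: "('l, 'p) aks \<Rightarrow> 'p set set" where
  "Pbul K = {P. phat K P = P}"

definition arrb :: "('l, 'p) aks \<Rightarrow> 'p set \<Rightarrow> 'p set \<Rightarrow> 'p set" where
  "arrb K P Q = phat K {push K t \<pi> | t \<pi>. t \<in> rpol K P \<and> \<pi> \<in> Q}"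

definition compb :: "('l, 'p) aks \<Rightarrow> 'p set \<Rightarrow> 'p set \<Rightarrow> 'p set" where
  "compb K P Q = {\<pi>. \<forall>t\<in>rpol K Q. \<forall>\<pi>'\<in>pcl K {\<pi>}. push K t \<pi>' \<in> P}"

definition Ecomb :: "('l, 'p) aks \<Rightarrow> 'l" where
  "Ecomb K = app K (Sc K) (app K (Kc K) (app K (app K (Sc K) (Kc K)) (Kc K)))"

definition Bcomb :: "('l, 'p) aks \<Rightarrow> 'l" where
  "Bcomb K = app K (app K (Sc K) (app K (Kc K) (Sc K))) (Kc K)"

definition kbul :: "('l, 'p) aks \<Rightarrow> 'p set" where
  "kbul K = lpol K {app K (Ecomb K) (Kc K)}"

definition sbul :: "('l, 'p) aks \<Rightarrow> 'p set" where
  "sbul K = lpol K {app K (Ecomb K) (app K (app K (Bcomb K) (Ecomb K)) (Sc K))}"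

definition Phib :: "('l, 'p) aks \<Rightarrow> 'p set set" where
  "Phib K = {P \<in> Pbul K. \<exists>t\<in>QP K. \<forall>\<pi>\<in>P. perp K t \<pi>}"

definition sqb :: "('l, 'p) aks \<Rightarrow> 'p set \<Rightarrow> 'p set \<Rightarrow> bool" where
  "sqb K Q R \<longleftrightarrow> (\<exists>t\<in>QP K. \<forall>\<pi>\<in>arrb K Q R. perp K t \<pi>)"

definition sqA :: "('l, 'p) aks \<Rightarrow> 'p set \<Rightarrow> 'p set \<Rightarrow> bool" where
  "sqA K Q R \<longleftrightarrow> (\<exists>F\<in>Phib K. compb K F Q \<supseteq> R)"

datatype cterm = CVar nat | CApp cterm cterm | CK | CS

fun cfree :: "nat \<Rightarrow> cterm \<Rightarrow> bool" where
  "cfree x (CVar y) = (x = y)"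
| "cfree x (CApp t u) = (cfree x t \<or> cfree x u)"
| "cfree x CK = False"
| "cfree x CS = False"

fun cabs :: "nat \<Rightarrow> cterm \<Rightarrow> cterm" where
  "cabs x (CVar y) = (if x = y then CApp (CApp CS CK) CK else CApp CK (CVar y))"
| "cabs x (CApp t u) = CApp (CApp CS (cabs x t)) (cabs x u)"
| "cabs x CK = CApp CK CK"
| "cabs x CS = CApp CK CS"

fun ceval :: "('a \<Rightarrow> 'a \<Rightarrow> 'a) \<Rightarrow> 'a \<Rightarrow> 'a \<Rightarrow> (nat \<Rightarrow> 'a) \<Rightarrow> cterm \<Rightarrow> 'a" where
  "ceval ap k s env (CVar y) = env y"
| "ceval ap k s env (CApp t u) = ap (ceval ap k s env t) (ceval ap k s env u)"
| "ceval ap k s env CK = k"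
| "ceval ap k s env CS = s"

text \<open>p = lam x lam y lam z. z x y  (x = 0, y = 1, z = 2), a closed term.\<close>
definition pair_term :: cterm where
  "pair_term = cabs 0 (cabs 1 (cabs 2 (CApp (CApp (CVar 2) (CVar 0)) (CVar 1))))"

definition pbul :: "('l, 'p) aks \<Rightarrow> 'p set" where
  "pbul K = ceval (compb K) (kbul K) (sbul K) (\<lambda>_. {}) pair_term"

definition meetb :: "('l, 'p) aks \<Rightarrow> 'p set \<Rightarrow> 'p set \<Rightarrow> 'p set" where
  "meetb K a b = compb K (compb K (pbul K) a) b"

definition heyting_preorder ::
  "'a set \<Rightarrow> ('a \<Rightarrow> 'a \<Rightarrow> bool) \<Rightarrow> ('a \<Rightarrow> 'a \<Rightarrow> 'a) \<Rightarrow> ('a \<Rightarrow> 'a \<Rightarrow> 'a) \<Rightarrow> bool" where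
  "heyting_preorder C le mt imp \<longleftrightarrow>
     (\<forall>a\<in>C. le a a) \<and>
     (\<forall>a\<in>C. \<forall>b\<in>C. \<forall>c\<in>C. le a b \<longrightarrow> le b c \<longrightarrow> le a c) \<and>
     (\<forall>a\<in>C. \<forall>b\<in>C. mt a b \<in> C \<and> imp a b \<in> C) \<and>
     (\<forall>a\<in>C. \<forall>b\<in>C. le (mt a b) a \<and> le (mt a b) b) \<and>
     (\<forall>a\<in>C. \<forall>b\<in>C. \<forall>c\<in>C. le c a \<longrightarrow> le c b \<longrightarrow> le c (mt a b)) \<and>
     (\<exists>top\<in>C. \<forall>a\<in>C. le a top) \<and>
     (\<forall>a\<in>C. \<forall>b\<in>C. \<forall>c\<in>C. le (mt a b) c \<longleftrightarrow> le a (imp b c))"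

end

theory Submission
  imports Defs
begin

text \<open>For \<open>F, R \<in> Pbul K\<close> application and arrow are adjoint: \<open>R \<subseteq> F \<circ>\<^sub>\<bullet> Q\<close> iff
  \<open>Q \<rightarrow>\<^sub>\<bullet> R \<subseteq> F\<close>. So \<open>Q \<rightarrow>\<^sub>\<bullet> R\<close> is the smallest witness \<open>F\<close> for \<open>Q \<sqsubseteq>\<^sub>\<A> R\<close>, and
  since a realizer of \<open>F\<close> realizes every subset of \<open>F\<close>, a witness in \<open>\<Phi>\<close> exists iff
  \<open>Q \<rightarrow>\<^sub>\<bullet> R\<close> has a realizer in \<open>QP\<close>: the two preorders coincide. For the Heyting
  structure, the Krivine reduction rules yield the combinator laws \<open>k a b \<le> a\<close>,
  \<open>s a b c \<le> a c (b c)\<close>, \<open>p a b c \<le> c a b\<close> and the closure of \<open>\<Phi>\<close> under application;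
  reflexivity, transitivity, meets and the adjunction then follow by combinatory
  calculations, with the adjunction again reducing to the one between \<open>\<circ>\<^sub>\<bullet>\<close> and
  \<open>\<rightarrow>\<^sub>\<bullet>\<close>.\<close>

locale krivine_structure =
  fixes K :: "('l, 'p) aks"
  assumes is_aks: "is_aks K"
begin

lemma QP_app: "t \<in> QP K \<Longrightarrow> s \<in> QP K \<Longrightarrow> app K t s \<in> QP K"
  using is_aks unfolding is_aks_def by blast

lemma Kc_in_QP: "Kc K \<in> QP K"
  using is_aks unfolding is_aks_def by blast

lemma Sc_in_QP: "Sc K \<in> QP K"
  using is_aks unfolding is_aks_def by blast

lemma perp_push_app: "perp K t (push K s \<pi>) \<Longrightarrow> perp K (app K t s) \<pi>"
  using is_aks unfolding is_aks_def by blast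

lemma Kc_perp: "perp K t \<pi> \<Longrightarrow> perp K (Kc K) (push K t (push K s \<pi>))"
  using is_aks unfolding is_aks_def by blast

lemma Sc_perp:
  "perp K (app K (app K t u) (app K s u)) \<pi> \<Longrightarrow> perp K (Sc K) (push K t (push K s (push K u \<pi>)))"
  using is_aks unfolding is_aks_def by blast

abbreviation compb_infix :: "'p set \<Rightarrow> 'p set \<Rightarrow> 'p set" (infixl "\<cdot>" 90)
  where "a \<cdot> b \<equiv> compb K a b"

definition Icomb :: 'l where
  "Icomb = app K (app K (Sc K) (Kc K)) (Kc K)"

lemma Icomb_perp:
  assumes "perp K t \<pi>"
  shows "perp K Icomb (push K t \<pi>)"
proof -
  have "perp K (Kc K) (push K t (push K (app K (Kc K) t) \<pi>))" using assms by (rule Kc_perp)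
  hence "perp K (app K (app K (Kc K) t) (app K (Kc K) t)) \<pi>" by (intro perp_push_app)
  hence "perp K (Sc K) (push K (Kc K) (push K (Kc K) (push K t \<pi>)))" by (rule Sc_perp)
  thus ?thesis unfolding Icomb_def by (intro perp_push_app)
qed

lemma Ecomb_perp:
  assumes "perp K (app K t s) \<pi>"
  shows "perp K (Ecomb K) (push K t (push K s \<pi>))"
proof -
  have "perp K Icomb (push K (app K t s) \<pi>)" using assms by (rule Icomb_perp)
  hence "perp K (Kc K) (push K Icomb (push K s (push K (app K t s) \<pi>)))" by (rule Kc_perp)
  hence "perp K (app K (app K (app K (Kc K) Icomb) s) (app K t s)) \<pi>" by (intro perp_push_app)
  hence "perp K (Sc K) (push K (app K (Kc K) Icomb) (push K t (push K s \<pi>)))" by (rule Sc_perp)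
  thus ?thesis unfolding Ecomb_def Icomb_def by (intro perp_push_app)
qed

lemma Bcomb_perp:
  assumes "perp K f (push K (app K g x) \<pi>)"
  shows "perp K (Bcomb K) (push K f (push K g (push K x \<pi>)))"
proof -
  have "perp K (Kc K) (push K f (push K x (push K (app K g x) \<pi>)))" using assms by (rule Kc_perp)
  hence "perp K (app K (app K (app K (Kc K) f) x) (app K g x)) \<pi>" by (intro perp_push_app)
  hence "perp K (Sc K) (push K (app K (Kc K) f) (push K g (push K x \<pi>)))" by (rule Sc_perp)
  hence "perp K (Kc K)
      (push K (Sc K) (push K f (push K (app K (Kc K) f) (push K g (push K x \<pi>)))))"
    by (rule Kc_perp)
  hence "perp K (app K (app K (app K (Kc K) (Sc K)) f) (app K (Kc K) f)) (push K g (push K x \<pi>))"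
    by (intro perp_push_app)
  hence "perp K (Sc K)
      (push K (app K (Kc K) (Sc K)) (push K (Kc K) (push K f (push K g (push K x \<pi>)))))"
    by (rule Sc_perp)
  thus ?thesis unfolding Bcomb_def by (intro perp_push_app)
qed

lemma Ecomb_in_QP: "Ecomb K \<in> QP K"
  unfolding Ecomb_def by (intro QP_app Kc_in_QP Sc_in_QP)

lemma Bcomb_in_QP: "Bcomb K \<in> QP K"
  unfolding Bcomb_def by (intro QP_app Kc_in_QP Sc_in_QP)

subsection \<open>Closed sets of stacks\<close>

lemma pcl_singleton_iff: "\<pi>' \<in> pcl K {\<pi>} \<longleftrightarrow> (\<forall>t. perp K t \<pi> \<longrightarrow> perp K t \<pi>')"
  unfolding pcl_def lpol_def rpol_def by auto

lemma pcl_singleton_refl: "\<pi> \<in> pcl K {\<pi>}"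
  by (simp add: pcl_singleton_iff)

lemma perp_pcl_singleton: "\<pi>' \<in> pcl K {\<pi>} \<Longrightarrow> perp K t \<pi> \<Longrightarrow> perp K t \<pi>'"
  by (simp add: pcl_singleton_iff)

lemma pcl_singleton_trans: "\<pi>'' \<in> pcl K {\<pi>'} \<Longrightarrow> \<pi>' \<in> pcl K {\<pi>} \<Longrightarrow> \<pi>'' \<in> pcl K {\<pi>}"
  by (simp add: pcl_singleton_iff)

lemma subset_phat: "X \<subseteq> phat K X"
  unfolding phat_def using pcl_singleton_refl by blast

lemma phat_mono: "X \<subseteq> Y \<Longrightarrow> phat K X \<subseteq> phat K Y"
  unfolding phat_def by blast

lemma Pbul_iff: "P \<in> Pbul K \<longleftrightarrow> (\<forall>\<pi>\<in>P. pcl K {\<pi>} \<subseteq> P)"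
  unfolding Pbul_def phat_def using pcl_singleton_refl by blast

lemma phat_in_Pbul: "phat K X \<in> Pbul K"
  unfolding Pbul_iff phat_def using pcl_singleton_trans by blast

lemma compb_in_Pbul: "P \<cdot> Q \<in> Pbul K"
  unfolding Pbul_iff compb_def using pcl_singleton_trans by blast

lemma lpol_in_Pbul: "lpol K L \<in> Pbul K"
  unfolding Pbul_iff lpol_def using perp_pcl_singleton by blast

lemma arrb_in_Pbul: "arrb K P Q \<in> Pbul K"
  unfolding arrb_def by (rule phat_in_Pbul)

lemma subset_compb_iff_arrb_subset:
  assumes "P \<in> Pbul K" and "R \<in> Pbul K"
  shows "R \<subseteq> P \<cdot> Q \<longleftrightarrow> arrb K Q R \<subseteq> P"
proof
  assume R_sub: "R \<subseteq> P \<cdot> Q"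
  have "{push K t \<pi> | t \<pi>. t \<in> rpol K Q \<and> \<pi> \<in> R} \<subseteq> P"
    using R_sub pcl_singleton_refl unfolding compb_def by blast
  hence "arrb K Q R \<subseteq> phat K P" unfolding arrb_def by (rule phat_mono)
  thus "arrb K Q R \<subseteq> P" using assms(1) unfolding Pbul_def by simp
next
  assume arr_sub: "arrb K Q R \<subseteq> P"
  show "R \<subseteq> P \<cdot> Q"
    unfolding compb_def
  proof (intro subsetI CollectI ballI)
    fix \<pi> t \<pi>' assume "\<pi> \<in> R" "t \<in> rpol K Q" "\<pi>' \<in> pcl K {\<pi>}"
    hence "push K t \<pi>' \<in> {push K t \<pi> | t \<pi>. t \<in> rpol K Q \<and> \<pi> \<in> R}"
      using assms(2) unfolding Pbul_iff by blast
    hence "push K t \<pi>' \<in> arrb K Q R" unfolding arrb_def by (rule subsetD[OF subset_phat])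
    thus "push K t \<pi>' \<in> P" using arr_sub by blast
  qed
qed

subsection \<open>The combinator laws\<close>

lemma compb_mono: "a' \<subseteq> a \<Longrightarrow> b' \<subseteq> b \<Longrightarrow> a' \<cdot> b' \<subseteq> a \<cdot> b"
  unfolding compb_def rpol_def by blast

lemma compb_memI:
  "(\<And>t \<pi>'. t \<in> rpol K Q \<Longrightarrow> \<pi>' \<in> pcl K {\<pi>} \<Longrightarrow> push K t \<pi>' \<in> P) \<Longrightarrow> \<pi> \<in> P \<cdot> Q"
  unfolding compb_def by blast

lemma compb_memD: "\<pi> \<in> P \<cdot> Q \<Longrightarrow> t \<in> rpol K Q \<Longrightarrow> push K t \<pi> \<in> P"
  unfolding compb_def using pcl_singleton_refl by blast

lemma app_in_rpol_compb:
  assumes "t \<in> rpol K P" and "s \<in> rpol K Q"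
  shows "app K t s \<in> rpol K (P \<cdot> Q)"
  unfolding rpol_def
proof (intro CollectI ballI)
  fix \<pi> assume "\<pi> \<in> P \<cdot> Q"
  hence "push K s \<pi> \<in> P" using assms(2) by (rule compb_memD)
  hence "perp K t (push K s \<pi>)" using assms(1) unfolding rpol_def by blast
  thus "perp K (app K t s) \<pi>" by (rule perp_push_app)
qed

lemma kbul_reduces: "a \<subseteq> kbul K \<cdot> a \<cdot> b"
proof (intro subsetI compb_memI)
  fix \<pi> s \<pi>' t \<pi>''
  assume "\<pi> \<in> a" "t \<in> rpol K a" "\<pi>' \<in> pcl K {\<pi>}" "\<pi>'' \<in> pcl K {push K s \<pi>'}"
  hence "perp K t \<pi>'" unfolding rpol_def using perp_pcl_singleton by blast
  hence "perp K (Kc K) (push K t (push K s \<pi>'))" by (rule Kc_perp)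
  hence "perp K (app K (Kc K) t) (push K s \<pi>')" by (rule perp_push_app)
  hence "perp K (app K (Kc K) t) \<pi>''" by (rule perp_pcl_singleton[OF \<open>\<pi>'' \<in> _\<close>])
  hence "perp K (Ecomb K) (push K (Kc K) (push K t \<pi>''))" by (rule Ecomb_perp)
  hence "perp K (app K (Ecomb K) (Kc K)) (push K t \<pi>'')" by (rule perp_push_app)
  thus "push K t \<pi>'' \<in> kbul K" unfolding kbul_def lpol_def by simp
qed

lemma sbul_reduces: "a \<cdot> c \<cdot> (b \<cdot> c) \<subseteq> sbul K \<cdot> a \<cdot> b \<cdot> c"
proof (intro subsetI compb_memI)
  fix \<pi> w \<pi>1 y \<pi>2 x \<pi>3
  assume \<pi>: "\<pi> \<in> a \<cdot> c \<cdot> (b \<cdot> c)" and "w \<in> rpol K c" "\<pi>1 \<in> pcl K {\<pi>}"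
    and "y \<in> rpol K b" "\<pi>2 \<in> pcl K {push K w \<pi>1}"
    and "x \<in> rpol K a" "\<pi>3 \<in> pcl K {push K y \<pi>2}"
  let ?S' = "app K (app K (Bcomb K) (Ecomb K)) (Sc K)"
  have "app K y w \<in> rpol K (b \<cdot> c)" "app K x w \<in> rpol K (a \<cdot> c)"
    using app_in_rpol_compb \<open>y \<in> _\<close> \<open>x \<in> _\<close> \<open>w \<in> _\<close> by auto
  hence "perp K (app K x w) (push K (app K y w) \<pi>)"
    using \<pi> compb_memD unfolding rpol_def by blast
  hence "perp K (app K (app K x w) (app K y w)) \<pi>1"
    by (rule perp_pcl_singleton[OF \<open>\<pi>1 \<in> _\<close> perp_push_app])
  hence "perp K (Sc K) (push K x (push K y (push K w \<pi>1)))" by (rule Sc_perp)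
  hence "perp K (app K (app K (Sc K) x) y) \<pi>2"
    by (rule perp_pcl_singleton[OF \<open>\<pi>2 \<in> _\<close> perp_push_app[OF perp_push_app]])
  hence "perp K (Ecomb K) (push K (app K (Sc K) x) (push K y \<pi>2))" by (rule Ecomb_perp)
  hence "perp K (Bcomb K) (push K (Ecomb K) (push K (Sc K) (push K x (push K y \<pi>2))))"
    by (rule Bcomb_perp)
  hence "perp K (app K ?S' x) \<pi>3"
    by (rule perp_pcl_singleton[OF \<open>\<pi>3 \<in> _\<close> perp_push_app[OF perp_push_app[OF perp_push_app]]])
  hence "perp K (Ecomb K) (push K ?S' (push K x \<pi>3))" by (rule Ecomb_perp)
  hence "perp K (app K (Ecomb K) ?S') (push K x \<pi>3)" by (rule perp_push_app)
  thus "push K x \<pi>3 \<in> sbul K" unfolding sbul_def lpol_def by simp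
qed

abbreviation cterm_eval :: "(nat \<Rightarrow> 'p set) \<Rightarrow> cterm \<Rightarrow> 'p set"
  where "cterm_eval env t \<equiv> ceval (compb K) (kbul K) (sbul K) env t"

lemma cabs_reduces: "cterm_eval (env(x := v)) t \<subseteq> cterm_eval env (cabs x t) \<cdot> v"
proof (induction t)
  case (CVar y)
  show ?case
  proof (cases "x = y")
    case True
    have "v \<subseteq> kbul K \<cdot> v \<cdot> (kbul K \<cdot> v)" by (rule kbul_reduces)
    also have "\<dots> \<subseteq> sbul K \<cdot> kbul K \<cdot> kbul K \<cdot> v" by (rule sbul_reduces)
    finally show ?thesis using True by simp
  qed (simp add: kbul_reduces)
next
  case (CApp t u)
  have "cterm_eval (env(x := v)) (CApp t u)
      \<subseteq> cterm_eval env (cabs x t) \<cdot> v \<cdot> (cterm_eval env (cabs x u) \<cdot> v)"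
    unfolding ceval.simps by (rule compb_mono[OF CApp.IH])
  also have "\<dots> \<subseteq> cterm_eval env (cabs x (CApp t u)) \<cdot> v" by (simp add: sbul_reduces)
  finally show ?case .
qed (simp_all add: kbul_reduces)

lemma pbul_reduces: "c \<cdot> a \<cdot> b \<subseteq> pbul K \<cdot> a \<cdot> b \<cdot> c"
proof -
  let ?env = "\<lambda>_. {} :: 'p set"
  let ?body = "CApp (CApp (CVar 2) (CVar 0)) (CVar 1)"
  have "c \<cdot> a \<cdot> b = cterm_eval (?env(0 := a, 1 := b, 2 := c)) ?body" by simp
  also have "\<dots> \<subseteq> cterm_eval (?env(0 := a, 1 := b)) (cabs 2 ?body) \<cdot> c"
    by (rule cabs_reduces)
  also have "\<dots> \<subseteq> cterm_eval (?env(0 := a)) (cabs 1 (cabs 2 ?body)) \<cdot> b \<cdot> c"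
    by (intro compb_mono cabs_reduces order_refl)
  also have "\<dots> \<subseteq> pbul K \<cdot> a \<cdot> b \<cdot> c"
    unfolding pbul_def pair_term_def by (intro compb_mono cabs_reduces order_refl)
  finally show ?thesis .
qed

definition ibul :: "'p set" where
  "ibul = sbul K \<cdot> kbul K \<cdot> kbul K"

lemma ibul_reduces: "a \<subseteq> ibul \<cdot> a"
  using kbul_reduces sbul_reduces unfolding ibul_def by (rule order_trans)

lemma Phib_compb:
  assumes "P \<in> Phib K" and "Q \<in> Phib K"
  shows "P \<cdot> Q \<in> Phib K"
proof -
  obtain t s where "t \<in> QP K" "t \<in> rpol K P" "s \<in> QP K" "s \<in> rpol K Q"
    using assms unfolding Phib_def rpol_def by blast
  hence "app K t s \<in> QP K" "app K t s \<in> rpol K (P \<cdot> Q)"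
    by (simp_all add: QP_app app_in_rpol_compb)
  thus ?thesis unfolding Phib_def rpol_def using compb_in_Pbul by blast
qed

lemma lpol_singleton_in_Phib: "t \<in> QP K \<Longrightarrow> lpol K {t} \<in> Phib K"
  using lpol_in_Pbul[of "{t}"] unfolding Phib_def lpol_def by auto

lemma kbul_in_Phib: "kbul K \<in> Phib K"
  unfolding kbul_def by (intro lpol_singleton_in_Phib QP_app Ecomb_in_QP Kc_in_QP)

lemma sbul_in_Phib: "sbul K \<in> Phib K"
  unfolding sbul_def by (intro lpol_singleton_in_Phib QP_app Ecomb_in_QP Bcomb_in_QP Sc_in_QP)

lemma empty_in_Phib: "{} \<in> Phib K"
  unfolding Phib_def Pbul_def phat_def using Kc_in_QP by blast

lemma cterm_eval_in_Phib: "(\<And>y. env y \<in> Phib K) \<Longrightarrow> cterm_eval env t \<in> Phib K"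
  by (induction t) (simp_all add: Phib_compb kbul_in_Phib sbul_in_Phib)

lemma pbul_in_Phib: "pbul K \<in> Phib K"
  unfolding pbul_def by (intro cterm_eval_in_Phib empty_in_Phib)

lemma ibul_in_Phib: "ibul \<in> Phib K"
  unfolding ibul_def by (intro Phib_compb sbul_in_Phib kbul_in_Phib)

lemmas combinators_in_Phib = kbul_in_Phib sbul_in_Phib ibul_in_Phib pbul_in_Phib

subsection \<open>The two preorders\<close>

lemma sqA_iff: "sqA K Q R \<longleftrightarrow> (\<exists>F\<in>Phib K. R \<subseteq> F \<cdot> Q)"
  unfolding sqA_def by blast

lemma sqAI: "R \<subseteq> F \<cdot> Q \<Longrightarrow> F \<in> Phib K \<Longrightarrow> sqA K Q R"
  unfolding sqA_iff by blast

lemma sqb_iff_sqA: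
  assumes "Q \<in> Pbul K" and "R \<in> Pbul K"
  shows "sqb K Q R \<longleftrightarrow> sqA K Q R"
proof
  assume "sqb K Q R"
  hence "arrb K Q R \<in> Phib K" unfolding sqb_def Phib_def using arrb_in_Pbul by blast
  moreover have "R \<subseteq> arrb K Q R \<cdot> Q"
    using subset_compb_iff_arrb_subset[OF arrb_in_Pbul assms(2)] by simp
  ultimately show "sqA K Q R" unfolding sqA_iff by blast
next
  assume "sqA K Q R"
  then obtain F where F: "F \<in> Phib K" "R \<subseteq> F \<cdot> Q" unfolding sqA_iff by blast
  hence "arrb K Q R \<subseteq> F"
    using subset_compb_iff_arrb_subset[of F R Q] assms(2) unfolding Phib_def by blast
  thus "sqb K Q R" using F(1) unfolding sqb_def Phib_def by blast
qed

lemma sqA_refl: "sqA K a a"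
  using ibul_reduces ibul_in_Phib by (rule sqAI)

lemma sqA_trans:
  assumes "sqA K a b" and "sqA K b c"
  shows "sqA K a c"
proof -
  obtain F G where F: "F \<in> Phib K" "b \<subseteq> F \<cdot> a" and G: "G \<in> Phib K" "c \<subseteq> G \<cdot> b"
    using assms unfolding sqA_iff by blast
  have "c \<subseteq> G \<cdot> (F \<cdot> a)" using G(2) F(2) compb_mono by blast
  also have "\<dots> \<subseteq> kbul K \<cdot> G \<cdot> a \<cdot> (F \<cdot> a)" by (intro compb_mono kbul_reduces order_refl)
  also have "\<dots> \<subseteq> sbul K \<cdot> (kbul K \<cdot> G) \<cdot> F \<cdot> a" by (rule sbul_reduces)
  finally show ?thesis
    by (rule sqAI) (intro Phib_compb combinators_in_Phib F(1) G(1))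
qed

lemma sqA_pair_fst: "sqA K (pbul K \<cdot> a \<cdot> b) a"
proof -
  let ?x = "pbul K \<cdot> a \<cdot> b"
  have "a \<subseteq> kbul K \<cdot> a \<cdot> b" by (rule kbul_reduces)
  also have "\<dots> \<subseteq> ?x \<cdot> kbul K" by (rule pbul_reduces)
  also have "\<dots> \<subseteq> ibul \<cdot> ?x \<cdot> (kbul K \<cdot> kbul K \<cdot> ?x)"
    by (intro compb_mono ibul_reduces kbul_reduces)
  also have "\<dots> \<subseteq> sbul K \<cdot> ibul \<cdot> (kbul K \<cdot> kbul K) \<cdot> ?x" by (rule sbul_reduces)
  finally show ?thesis
    by (rule sqAI) (intro Phib_compb combinators_in_Phib)
qed

lemma sqA_pair_snd: "sqA K (pbul K \<cdot> a \<cdot> b) b"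
proof -
  let ?x = "pbul K \<cdot> a \<cdot> b"
  have "b \<subseteq> ibul \<cdot> b" by (rule ibul_reduces)
  also have "\<dots> \<subseteq> kbul K \<cdot> ibul \<cdot> a \<cdot> b" by (intro compb_mono kbul_reduces order_refl)
  also have "\<dots> \<subseteq> ?x \<cdot> (kbul K \<cdot> ibul)" by (rule pbul_reduces)
  also have "\<dots> \<subseteq> ibul \<cdot> ?x \<cdot> (kbul K \<cdot> (kbul K \<cdot> ibul) \<cdot> ?x)"
    by (intro compb_mono ibul_reduces kbul_reduces)
  also have "\<dots> \<subseteq> sbul K \<cdot> ibul \<cdot> (kbul K \<cdot> (kbul K \<cdot> ibul)) \<cdot> ?x" by (rule sbul_reduces)
  finally show ?thesis
    by (rule sqAI) (intro Phib_compb combinators_in_Phib)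
qed

lemma sqA_pair:
  assumes "sqA K c a" and "sqA K c b"
  shows "sqA K c (pbul K \<cdot> a \<cdot> b)"
proof -
  obtain F G where F: "F \<in> Phib K" "a \<subseteq> F \<cdot> c" and G: "G \<in> Phib K" "b \<subseteq> G \<cdot> c"
    using assms unfolding sqA_iff by blast
  have "pbul K \<cdot> a \<cdot> b \<subseteq> pbul K \<cdot> (F \<cdot> c) \<cdot> (G \<cdot> c)" by (intro compb_mono F(2) G(2) order_refl)
  also have "\<dots> \<subseteq> kbul K \<cdot> pbul K \<cdot> c \<cdot> (F \<cdot> c) \<cdot> (G \<cdot> c)"
    by (intro compb_mono kbul_reduces order_refl)
  also have "\<dots> \<subseteq> sbul K \<cdot> (kbul K \<cdot> pbul K) \<cdot> F \<cdot> c \<cdot> (G \<cdot> c)"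
    by (intro compb_mono sbul_reduces order_refl)
  also have "\<dots> \<subseteq> sbul K \<cdot> (sbul K \<cdot> (kbul K \<cdot> pbul K) \<cdot> F) \<cdot> G \<cdot> c" by (rule sbul_reduces)
  finally show ?thesis
    by (rule sqAI) (intro Phib_compb combinators_in_Phib F(1) G(1))
qed

lemma sqA_empty: "sqA K a {}"
  using empty_subsetI ibul_in_Phib by (rule sqAI)

lemma sqA_pair_iff_arrb:
  assumes "c \<in> Pbul K"
  shows "sqA K (pbul K \<cdot> a \<cdot> b) c \<longleftrightarrow> sqA K a (arrb K b c)"
proof
  assume "sqA K (pbul K \<cdot> a \<cdot> b) c"
  then obtain F where F: "F \<in> Phib K" "c \<subseteq> F \<cdot> (pbul K \<cdot> a \<cdot> b)" unfolding sqA_iff by blast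
  let ?G = "sbul K \<cdot> (kbul K \<cdot> (sbul K \<cdot> (kbul K \<cdot> F))) \<cdot> pbul K"
  have "c \<subseteq> kbul K \<cdot> F \<cdot> b \<cdot> (pbul K \<cdot> a \<cdot> b)"
    using F(2) compb_mono[OF kbul_reduces order_refl] by blast
  also have "\<dots> \<subseteq> sbul K \<cdot> (kbul K \<cdot> F) \<cdot> (pbul K \<cdot> a) \<cdot> b" by (rule sbul_reduces)
  also have "\<dots> \<subseteq> kbul K \<cdot> (sbul K \<cdot> (kbul K \<cdot> F)) \<cdot> a \<cdot> (pbul K \<cdot> a) \<cdot> b"
    by (intro compb_mono kbul_reduces order_refl)
  also have "\<dots> \<subseteq> ?G \<cdot> a \<cdot> b" by (intro compb_mono sbul_reduces order_refl)
  finally have "arrb K b c \<subseteq> ?G \<cdot> a"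
    using subset_compb_iff_arrb_subset[OF compb_in_Pbul assms] by simp
  thus "sqA K a (arrb K b c)"
    by (rule sqAI) (intro Phib_compb combinators_in_Phib F(1))
next
  assume "sqA K a (arrb K b c)"
  then obtain F where F: "F \<in> Phib K" "arrb K b c \<subseteq> F \<cdot> a" unfolding sqA_iff by blast
  let ?x = "pbul K \<cdot> a \<cdot> b"
  have "c \<subseteq> F \<cdot> a \<cdot> b" using subset_compb_iff_arrb_subset[OF compb_in_Pbul assms] F(2) by simp
  also have "\<dots> \<subseteq> ?x \<cdot> F" by (rule pbul_reduces)
  also have "\<dots> \<subseteq> ibul \<cdot> ?x \<cdot> (kbul K \<cdot> F \<cdot> ?x)" by (intro compb_mono ibul_reduces kbul_reduces)
  also have "\<dots> \<subseteq> sbul K \<cdot> ibul \<cdot> (kbul K \<cdot> F) \<cdot> ?x" by (rule sbul_reduces)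
  finally show "sqA K ?x c"
    by (rule sqAI) (intro Phib_compb combinators_in_Phib F(1))
qed

lemma heyting_preorder_sqb: "heyting_preorder (Pbul K) (sqb K) (meetb K) (arrb K)"
  unfolding heyting_preorder_def meetb_def
proof (intro conjI ballI impI)
  fix a assume "a \<in> Pbul K"
  thus "sqb K a a" by (simp add: sqb_iff_sqA sqA_refl)
next
  fix a b c assume mem: "a \<in> Pbul K" "b \<in> Pbul K" "c \<in> Pbul K"
  show "sqb K a c" if "sqb K a b" and "sqb K b c"
    using that by (simp add: mem sqb_iff_sqA sqA_trans)
next
  fix a b assume mem: "a \<in> Pbul K" "b \<in> Pbul K"
  show "sqb K (pbul K \<cdot> a \<cdot> b) a" "sqb K (pbul K \<cdot> a \<cdot> b) b"
    by (simp_all add: mem compb_in_Pbul sqb_iff_sqA sqA_pair_fst sqA_pair_snd)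
next
  fix a b c assume mem: "a \<in> Pbul K" "b \<in> Pbul K" "c \<in> Pbul K"
  show "sqb K c (pbul K \<cdot> a \<cdot> b)" if "sqb K c a" and "sqb K c b"
    using that by (simp add: mem compb_in_Pbul sqb_iff_sqA sqA_pair)
next
  have "{} \<in> Pbul K" using empty_in_Phib unfolding Phib_def by blast
  thus "\<exists>top\<in>Pbul K. \<forall>a\<in>Pbul K. sqb K a top"
    by (intro bexI[of _ "{}"] ballI) (simp_all add: sqb_iff_sqA sqA_empty)
next
  fix a b c assume mem: "a \<in> Pbul K" "b \<in> Pbul K" "c \<in> Pbul K"
  show "sqb K (pbul K \<cdot> a \<cdot> b) c \<longleftrightarrow> sqb K a (arrb K b c)"
    by (simp add: mem compb_in_Pbul arrb_in_Pbul sqb_iff_sqA sqA_pair_iff_arrb)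
qed (simp_all add: compb_in_Pbul arrb_in_Pbul)

end

theorem mainTheorem10:
  fixes K :: "('l, 'p) aks"
  assumes "is_aks K"
  shows "(\<forall>Q\<in>Pbul K. \<forall>R\<in>Pbul K. sqb K Q R \<longleftrightarrow> sqA K Q R)
         \<and> heyting_preorder (Pbul K) (sqb K) (meetb K) (arrb K)"
proof -
  interpret krivine_structure K using assms by (rule krivine_structure.intro)
  have "\<forall>Q\<in>Pbul K. \<forall>R\<in>Pbul K. sqb K Q R \<longleftrightarrow> sqA K Q R" by (simp add: sqb_iff_sqA)
  moreover have "heyting_preorder (Pbul K) (sqb K) (meetb K) (arrb K)" by (rule heyting_preorder_sqb)
  ultimately show ?thesis ..
qed

end
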